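(* Let $\mathcal C=\mathcal C(I,A,(\rho_i)_{i\in I},(C^a)_{a\in A})$ be a Cartan scheme and $\mathcal R=\mathcal R(\mathcal C,(R^a)_{a\in A})$ a root system of type $\mathcal C$. For $a\in A$ let $(R^a)^{\mathrm{re}}=\{\omega(\alpha_i)\mid \omega\in\mathrm{Hom}(b,a),\ b\in A,\ i\in I\}$. Then $\mathcal R^{\mathrm{re}}=\mathcal R(\mathcal C,((R^a)^{\mathrm{re}})_{a\in A})$ is a root system of type $\mathcal C$, and $\mathcal W(\mathcal R^{\mathrm{re}})=\mathcal W(\mathcal R)$.
   Context: Let $I$ be a nonempty finite set and $\{\alpha_i\mid i\in I\}$ the standard basis of $\mathbb Z^I$; $\mathbb N_0=\{0,1,2,\dots\}$. A generalized Cartan matrix is $C=(c_{ij})_{i,j\in I}\in\mathbb Z^{I\times I}$ with $c_{ii}=2$, $c_{jk}\le0$ for $j\ne k$, and $c_{ij}=0\Rightarrow c_{ji}=0$. A Cartan scheme $\mathcal C=\mathcal C(I,A,(\rho_i)_{i\in I},(C^a)_{a\in A})$ consists of a nonempty set $A$, maps $\rho_i:A\to A$ and generalized Cartan matrices $C^a=(c^a_{jk})_{j,k\in I}$ such that (C1) $\rho_i^2=\mathrm{id}$ and (C2) $c^a_{ij}=c^{\rho_i(a)}_{ij}$ for all $a\in A$, $i,j\in I$. For $i\in I$, $a\in A$ let $\sigma_i^a\in\mathrm{Aut}(\mathbb Z^I)$, $\sigma_i^a(\alpha_j)=\alpha_j-c^a_{ij}\alpha_i$. The Weyl groupoid $\mathcal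 W(\mathcal C)$ has object set $A$; $\mathrm{Hom}(a,b)$ consists of the triples $(b,f,a)$ with $f=\sigma_{i_n}^{a_{n-1}}\cdots\sigma_{i_1}^{a_0}$, where $n\ge0$, $i_1,\dots,i_n\in I$, $a_0=a$, $a_k=\rho_{i_k}(a_{k-1})$, $a_n=b$ (one writes $\omega(v)=f(v)$ for $\omega=(b,f,a)$); composition is multiplication in $\mathrm{Aut}(\mathbb Z^I)$. A root system of type $\mathcal C$ is a family $\mathcal R=\mathcal R(\mathcal C,(R^a)_{a\in A})$ of subsets $R^a\subset\mathbb Z^I$ such that, writing $R^a_+=R^a\cap\mathbb N_0^I$ and $m^a_{i,j}=|R^a\cap(\mathbb N_0\alpha_i+\mathbb N_0\alpha_j)|$, for all $a\in A$, $i,j\in I$: (R1) $R^a=R^a_+\cup(-R^a_+)$; (R2) $R^a\cap\mathbb Z\alpha_i=\{\alpha_i,-\alpha_i\}$; (R3) $\sigma_i^a(R^a)=R^{\rho_i(a)}$; (R4) if $i\neq j$ and $m^a_{i,j}$ is finite then $(\rho_i\rho_j)^{m^a_{i,j}}(a)=a$. The Weyl groupoid $\mathcal W(\mathcal R)$ of a root system of type $\mathcal C$ is defined to be $\mathcal W(\mathcal C)$. *)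

theory Defs
  imports Main
begin

text \<open>Elements of Z^I are represented as functions 'i => int vanishing outside I.\<close>

definition zvec :: "'i set \<Rightarrow> ('i \<Rightarrow> int) set" where
  "zvec I = {v. \<forall>k. k \<notin> I \<longrightarrow> v k = 0}"

definition alpha :: "'i \<Rightarrow> 'i \<Rightarrow> int" where
  "alpha i = (\<lambda>k. if k = i then 1 else 0)"

definition gen_cartan_matrix :: "'i set \<Rightarrow> ('i \<Rightarrow> 'i \<Rightarrow> int) \<Rightarrow> bool" where
  "gen_cartan_matrix I c \<longleftrightarrow>
     (\<forall>i\<in>I. c i i = 2) \<and>
     (\<forall>j\<in>I. \<forall>k\<in>I. j \<noteq> k \<longrightarrow> c j k \<le> 0) \<and>
     (\<forall>i\<in>I. \<forall>j\<in>I. c i j = 0 \<longrightarrow> c j i = 0)"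

definition cartan_scheme ::
  "'i set \<Rightarrow> 'a set \<Rightarrow> ('i \<Rightarrow> 'a \<Rightarrow> 'a) \<Rightarrow> ('a \<Rightarrow> 'i \<Rightarrow> 'i \<Rightarrow> int) \<Rightarrow> bool" where
  "cartan_scheme I A rho C \<longleftrightarrow>
     finite I \<and> I \<noteq> {} \<and> A \<noteq> {} \<and>
     (\<forall>i\<in>I. \<forall>a\<in>A. rho i a \<in> A \<and> rho i (rho i a) = a) \<and>
     (\<forall>a\<in>A. gen_cartan_matrix I (C a)) \<and>
     (\<forall>a\<in>A. \<forall>i\<in>I. \<forall>j\<in>I. C a i j = C (rho i a) i j)"

text \<open>sigma_i^a(v) = v - (sum_j c^a_ij v_j) alpha_i, the linear map with
  sigma_i^a(alpha_j) = alpha_j - c^a_ij alpha_i.\<close>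
definition sigma ::
  "'i set \<Rightarrow> ('a \<Rightarrow> 'i \<Rightarrow> 'i \<Rightarrow> int) \<Rightarrow> 'i \<Rightarrow> 'a \<Rightarrow> ('i \<Rightarrow> int) \<Rightarrow> ('i \<Rightarrow> int)" where
  "sigma I C i a v = (\<lambda>k. if k = i then v k - (\<Sum>j\<in>I. C a i j * v j) else v k)"

fun wtgt :: "('i \<Rightarrow> 'a \<Rightarrow> 'a) \<Rightarrow> 'a \<Rightarrow> 'i list \<Rightarrow> 'a" where
  "wtgt rho a [] = a"
| "wtgt rho a (i # is) = wtgt rho (rho i a) is"

text \<open>The map sigma_{i_n}^{a_{n-1}} ... sigma_{i_1}^{a_0}.\<close>
fun wmap :: "'i set \<Rightarrow> ('i \<Rightarrow> 'a \<Rightarrow> 'a) \<Rightarrow> ('a \<Rightarrow> 'i \<Rightarrow> 'i \<Rightarrow> int) \<Rightarrow> 'a \<Rightarrow> 'i list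
              \<Rightarrow> ('i \<Rightarrow> int) \<Rightarrow> ('i \<Rightarrow> int)" where
  "wmap I rho C a [] = id"
| "wmap I rho C a (i # is) = wmap I rho C (rho i a) is \<circ> sigma I C i a"

text \<open>Hom(a,b) in the Weyl groupoid: triples (b, f, a).\<close>
definition wg_hom ::
  "'i set \<Rightarrow> ('i \<Rightarrow> 'a \<Rightarrow> 'a) \<Rightarrow> ('a \<Rightarrow> 'i \<Rightarrow> 'i \<Rightarrow> int) \<Rightarrow> 'a \<Rightarrow> 'a
    \<Rightarrow> ('a \<times> (('i \<Rightarrow> int) \<Rightarrow> ('i \<Rightarrow> int)) \<times> 'a) set" where
  "wg_hom I rho C a b = {(b, wmap I rho C a is, a) | is. set is \<subseteq> I \<and> wtgt rho a is = b}"

definition weyl_groupoid ::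
  "'i set \<Rightarrow> 'a set \<Rightarrow> ('i \<Rightarrow> 'a \<Rightarrow> 'a) \<Rightarrow> ('a \<Rightarrow> 'i \<Rightarrow> 'i \<Rightarrow> int)
    \<Rightarrow> 'a set \<times> ('a \<Rightarrow> 'a \<Rightarrow> ('a \<times> (('i \<Rightarrow> int) \<Rightarrow> ('i \<Rightarrow> int)) \<times> 'a) set)" where
  "weyl_groupoid I A rho C = (A, \<lambda>a b. if a \<in> A \<and> b \<in> A then wg_hom I rho C a b else {})"

text \<open>The Weyl groupoid of a root system of type C is by definition W(C).\<close>
definition weyl_groupoid_rs ::
  "'i set \<Rightarrow> 'a set \<Rightarrow> ('i \<Rightarrow> 'a \<Rightarrow> 'a) \<Rightarrow> ('a \<Rightarrow> 'i \<Rightarrow> 'i \<Rightarrow> int) \<Rightarrow> ('a \<Rightarrow> ('i \<Rightarrow> int) set)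
    \<Rightarrow> 'a set \<times> ('a \<Rightarrow> 'a \<Rightarrow> ('a \<times> (('i \<Rightarrow> int) \<Rightarrow> ('i \<Rightarrow> int)) \<times> 'a) set)" where
  "weyl_groupoid_rs I A rho C R = weyl_groupoid I A rho C"

definition pos_roots :: "('i \<Rightarrow> int) set \<Rightarrow> ('i \<Rightarrow> int) set" where
  "pos_roots S = {v \<in> S. \<forall>k. 0 \<le> v k}"

definition m_ij :: "('i \<Rightarrow> int) set \<Rightarrow> 'i \<Rightarrow> 'i \<Rightarrow> ('i \<Rightarrow> int) set" where
  "m_ij S i j = {v \<in> S. \<exists>m n::nat. v = (\<lambda>k. int m * alpha i k + int n * alpha j k)}"

definition root_system ::
  "'i set \<Rightarrow> 'a set \<Rightarrow> ('i \<Rightarrow> 'a \<Rightarrow> 'a) \<Rightarrow> ('a \<Rightarrow> 'i \<Rightarrow> 'i \<Rightarrow> int) \<Rightarrow> ('a \<Rightarrow> ('i \<Rightarrow> int) set) \<Rightarrow> bool" where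
  "root_system I A rho C R \<longleftrightarrow>
     cartan_scheme I A rho C \<and>
     (\<forall>a\<in>A. R a \<subseteq> zvec I) \<and>
     (\<forall>a\<in>A. R a = pos_roots (R a) \<union> uminus ` pos_roots (R a)) \<and>
     (\<forall>a\<in>A. \<forall>i\<in>I. R a \<inter> {(\<lambda>k. c * alpha i k) | c::int. True} = {alpha i, - alpha i}) \<and>
     (\<forall>a\<in>A. \<forall>i\<in>I. sigma I C i a ` R a = R (rho i a)) \<and>
     (\<forall>a\<in>A. \<forall>i\<in>I. \<forall>j\<in>I. i \<noteq> j \<longrightarrow> finite (m_ij (R a) i j) \<longrightarrow>
         ((rho i \<circ> rho j) ^^ card (m_ij (R a) i j)) a = a)"

definition real_roots ::
  "'i set \<Rightarrow> 'a set \<Rightarrow> ('i \<Rightarrow> 'a \<Rightarrow> 'a) \<Rightarrow> ('a \<Rightarrow> 'i \<Rightarrow> 'i \<Rightarrow> int) \<Rightarrow> 'a \<Rightarrow> ('i \<Rightarrow> int) set" where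
  "real_roots I A rho C a =
     {(fst (snd \<omega>)) (alpha i) | \<omega> b i. b \<in> A \<and> \<omega> \<in> wg_hom I rho C b a \<and> i \<in> I}"

end

theory Submission
  imports Defs "HOL-Library.Function_Algebras"
begin

(*
  Real roots are the images of simple roots under morphisms of the Weyl groupoid, so they lie in R,
  contain the simple roots, are stable under every sigma_i, and are closed under negation because
  sigma_i^a(alpha_i) = -alpha_i.  This gives (R1)-(R3).  For (R4) it suffices that
  m_ij(R^re a) = m_ij(R a) whenever the left side is finite.  Along the alternating word i, j, i, ...
  starting at a, the roots beta_s = (sigma_{i_1} ... sigma_{i_s})^-1 (alpha_{i_{s+1}}) are real and
  supported on {i, j}.  If all were positive they would be pairwise distinct, contradicting
  finiteness.  If beta_{n+1} is the first negative one, any positive root gamma supported on {i, j}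
  outside beta_0, ..., beta_n stays positive under the first n+1 reflections of the word, so it
  pulls back to a combination of -beta_n and beta_{n+1} with nonnegative coefficients, i.e. it is
  negative.  The Weyl groupoid depends only on the Cartan scheme.
*)

lemma wtgt_append: "wtgt rho a (xs @ ys) = wtgt rho (wtgt rho a xs) ys"
  by (induction xs arbitrary: a) auto

lemma wmap_append:
  "wmap I rho C a (xs @ ys) = wmap I rho C (wtgt rho a xs) ys \<circ> wmap I rho C a xs"
  by (induction xs arbitrary: a) auto

lemma sigma_uminus: "sigma I C i a (- v) = - sigma I C i a v"
  by (auto simp: sigma_def sum_negf fun_eq_iff)

lemma sigma_linear:
  "sigma I C i a (\<lambda>k. p * x k + q * y k) = (\<lambda>k. p * sigma I C i a x k + q * sigma I C i a y k)"
  by (auto simp: sigma_def fun_eq_iff algebra_simps sum.distrib sum_distrib_left)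

lemma wmap_uminus: "wmap I rho C a xs (- v) = - wmap I rho C a xs v"
  by (induction xs arbitrary: a v) (auto simp: sigma_uminus)

lemma wmap_linear:
  "wmap I rho C a xs (\<lambda>k. p * x k + q * y k)
     = (\<lambda>k. p * wmap I rho C a xs x k + q * wmap I rho C a xs y k)"
  by (induction xs arbitrary: a x y) (auto simp: sigma_linear)

definition supported_on :: "'i set \<Rightarrow> ('i \<Rightarrow> int) \<Rightarrow> bool" where
  "supported_on J v \<longleftrightarrow> (\<forall>k. k \<notin> J \<longrightarrow> v k = 0)"

lemma supported_on_pair:
  "supported_on {l, m} v \<Longrightarrow> l \<noteq> m \<Longrightarrow> v = (\<lambda>k. v l * alpha l k + v m * alpha m k)"
  by (auto simp: supported_on_def alpha_def fun_eq_iff)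

lemma alpha_nonneg: "0 \<le> alpha l"
  by (simp add: le_fun_def alpha_def)

lemma alpha_not_nonpos: "\<not> alpha l \<le> 0"
  by (auto simp: le_fun_def alpha_def dest: spec[of _ l])

lemma supported_on_uminus [simp]: "supported_on J (- v) \<longleftrightarrow> supported_on J v"
  by (simp add: supported_on_def)

lemma wmap_supported_on:
  "set xs \<subseteq> J \<Longrightarrow> supported_on J v \<Longrightarrow> supported_on J (wmap I rho C a xs v)"
proof (induction xs arbitrary: a v)
  case (Cons x xs)
  then have "supported_on J (sigma I C x a v)"
    by (auto simp: supported_on_def sigma_def)
  with Cons show ?case by simp
qed simp

lemma m_ij_eq: "i \<noteq> j \<Longrightarrow> m_ij S i j = {v \<in> S. supported_on {i, j} v \<and> 0 \<le> v}"
proof (intro equalityI subsetI)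
  fix v assume "v \<in> m_ij S i j"
  then show "v \<in> {v \<in> S. supported_on {i, j} v \<and> 0 \<le> v}"
    by (auto simp: m_ij_def alpha_def supported_on_def le_fun_def)
next
  fix v assume ij: "i \<noteq> j" and v: "v \<in> {v \<in> S. supported_on {i, j} v \<and> 0 \<le> v}"
  then have "v = (\<lambda>k. int (nat (v i)) * alpha i k + int (nat (v j)) * alpha j k)"
    using supported_on_pair[of i j v] by (simp add: le_fun_def)
  with v show "v \<in> m_ij S i j" unfolding m_ij_def by blast
qed

lemma pos_roots_eq: "pos_roots S = {v \<in> S. 0 \<le> v}"
  by (simp add: pos_roots_def le_fun_def)

locale cartan_root_system =
  fixes I :: "'i set" and A :: "'a set" and rho :: "'i \<Rightarrow> 'a \<Rightarrow> 'a"
    and C :: "'a \<Rightarrow> 'i \<Rightarrow> 'i \<Rightarrow> int" and R :: "'a \<Rightarrow> ('i \<Rightarrow> int) set"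
  assumes root_system: "root_system I A rho C R"
begin

(* The axioms are projected out rather than simplified: as rewrite rules, (C2) and (R1)
   make the simplifier loop. *)
lemma cartan_scheme: "cartan_scheme I A rho C"
  using root_system unfolding root_system_def by (elim conjE)

lemmas cartan_scheme_conds = cartan_scheme[unfolded cartan_scheme_def]
lemmas finite_I = cartan_scheme_conds[THEN conjunct1]
lemmas I_nonempty = cartan_scheme_conds[THEN conjunct2, THEN conjunct1]
lemmas rho_closed = cartan_scheme_conds[THEN conjunct2, THEN conjunct2, THEN conjunct2,
  THEN conjunct1, rule_format, THEN conjunct1]
lemmas rho_involutive = cartan_scheme_conds[THEN conjunct2, THEN conjunct2, THEN conjunct2,
  THEN conjunct1, rule_format, THEN conjunct2]
lemmas cartan_rho = cartan_scheme_conds[THEN conjunct2, THEN conjunct2, THEN conjunct2,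
  THEN conjunct2, THEN conjunct2, rule_format, symmetric]

lemma cartan_diag: "i \<in> I \<Longrightarrow> a \<in> A \<Longrightarrow> C a i i = 2"
  using cartan_scheme_conds by (simp add: gen_cartan_matrix_def)

lemmas root_system_conds = root_system[unfolded root_system_def, THEN conjunct2]
lemmas roots_zvec = root_system_conds[THEN conjunct1, rule_format]
lemmas roots_pos_neg = root_system_conds[THEN conjunct2, THEN conjunct1, rule_format]
lemmas roots_on_line = root_system_conds[THEN conjunct2, THEN conjunct2, THEN conjunct1, rule_format]
lemmas roots_sigma =
  root_system_conds[THEN conjunct2, THEN conjunct2, THEN conjunct2, THEN conjunct1, rule_format]
lemmas roots_rho_period =
  root_system_conds[THEN conjunct2, THEN conjunct2, THEN conjunct2, THEN conjunct2, rule_format]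

lemma roots_pos_or_neg:
  assumes "a \<in> A" "v \<in> R a"
  shows "0 \<le> v \<or> v \<le> 0"
proof -
  have "v \<in> pos_roots (R a) \<union> uminus ` pos_roots (R a)"
    using assms(2) by (subst (asm) roots_pos_neg[OF assms(1)])
  then show ?thesis by (auto simp: pos_roots_eq)
qed

lemma roots_uminus:
  assumes "a \<in> A" "v \<in> R a"
  shows "- v \<in> R a"
proof -
  have "v \<in> pos_roots (R a) \<union> uminus ` pos_roots (R a)"
    using assms(2) by (subst (asm) roots_pos_neg[OF assms(1)])
  then have "- v \<in> pos_roots (R a) \<union> uminus ` pos_roots (R a)"
    by (auto simp: pos_roots_eq)
  then show ?thesis by (subst roots_pos_neg[OF assms(1)])
qed

lemma simple_root_in_roots: "a \<in> A \<Longrightarrow> i \<in> I \<Longrightarrow> alpha i \<in> R a"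
  using roots_on_line by blast

lemma zero_not_root: "a \<in> A \<Longrightarrow> 0 \<notin> R a"
proof
  assume a: "a \<in> A" and "0 \<in> R a"
  obtain i where i: "i \<in> I" using I_nonempty by blast
  have "(0 :: 'i \<Rightarrow> int) = (\<lambda>k. 0 * alpha i k)" by (simp add: fun_eq_iff)
  with \<open>0 \<in> R a\<close> roots_on_line[OF a i] have "0 = alpha i \<or> 0 = - alpha i" by blast
  then have "(0::int) = alpha i i \<or> 0 = - alpha i i" by (metis uminus_apply zero_fun_apply)
  then show False by (simp add: alpha_def)
qed

lemma nonneg_nonpos_not_root: "a \<in> A \<Longrightarrow> v \<in> R a \<Longrightarrow> 0 \<le> v \<Longrightarrow> v \<le> 0 \<Longrightarrow> False"
  using zero_not_root[of a] order_antisym[of v 0] by simp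

lemma sigma_involutive:
  assumes i: "i \<in> I" and a: "a \<in> A"
  shows "sigma I C i (rho i a) (sigma I C i a v) = v"
proof -
  define s where "s = (\<Sum>j\<in>I. C a i j * v j)"
  have sv: "sigma I C i a v = (\<lambda>k. v k - (if k = i then s else 0))"
    by (auto simp: sigma_def s_def fun_eq_iff)
  have "(\<Sum>j\<in>I. C (rho i a) i j * sigma I C i a v j)
      = (\<Sum>j\<in>I. C a i j * v j - (if j = i then C a i j * s else 0))"
    by (rule sum.cong) (auto simp: cartan_rho i a sv algebra_simps)
  also have "\<dots> = s - C a i i * s"
    using finite_I i by (simp add: sum_subtractf s_def)
  also have "\<dots> = - s" using cartan_diag[OF i a] by simp
  finally show ?thesis by (auto simp: sigma_def[of I C i "rho i a"] sv fun_eq_iff)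
qed

lemma sigma_simple_root:
  assumes i: "i \<in> I" and a: "a \<in> A"
  shows "sigma I C i a (alpha i) = - alpha i"
proof -
  have "(\<Sum>j\<in>I. C a i j * alpha i j) = (\<Sum>j\<in>I. if j = i then C a i j else 0)"
    by (rule sum.cong) (auto simp: alpha_def)
  also have "\<dots> = 2" using finite_I i cartan_diag[OF i a] by simp
  finally show ?thesis by (auto simp: sigma_def fun_eq_iff alpha_def)
qed

lemma wtgt_closed: "a \<in> A \<Longrightarrow> set xs \<subseteq> I \<Longrightarrow> wtgt rho a xs \<in> A"
  by (induction xs arbitrary: a) (auto simp: rho_closed)

lemma wtgt_rev: "a \<in> A \<Longrightarrow> set xs \<subseteq> I \<Longrightarrow> wtgt rho (wtgt rho a xs) (rev xs) = a"
  by (induction xs arbitrary: a) (auto simp: wtgt_append rho_closed rho_involutive)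

lemma wmap_rev:
  "a \<in> A \<Longrightarrow> set xs \<subseteq> I \<Longrightarrow>
     wmap I rho C (wtgt rho a xs) (rev xs) (wmap I rho C a xs v) = v"
proof (induction xs arbitrary: a v)
  case (Cons x xs)
  then have x: "x \<in> I" and ra: "rho x a \<in> A" by (auto simp: rho_closed)
  have "wtgt rho (wtgt rho (rho x a) xs) (rev xs) = rho x a"
    using wtgt_rev[OF ra] Cons.prems by auto
  with Cons.IH[OF ra] Cons.prems show ?case
    by (simp add: wmap_append sigma_involutive[OF x Cons.prems(1)])
qed simp

lemma wmap_roots: "a \<in> A \<Longrightarrow> set xs \<subseteq> I \<Longrightarrow> v \<in> R a \<Longrightarrow> wmap I rho C a xs v \<in> R (wtgt rho a xs)"
proof (induction xs arbitrary: a v)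
  case (Cons x xs)
  then have "x \<in> I" by simp
  then have "sigma I C x a v \<in> R (rho x a)"
    using roots_sigma[OF Cons.prems(1)] Cons.prems(3) by blast
  with Cons show ?case by (simp add: rho_closed)
qed simp

lemma real_roots_iff:
  "v \<in> real_roots I A rho C a \<longleftrightarrow>
     (\<exists>b xs l. b \<in> A \<and> set xs \<subseteq> I \<and> wtgt rho b xs = a \<and> l \<in> I \<and> v = wmap I rho C b xs (alpha l))"
  unfolding real_roots_def wg_hom_def by force

lemma real_rootsI:
  "b \<in> A \<Longrightarrow> set xs \<subseteq> I \<Longrightarrow> wtgt rho b xs = a \<Longrightarrow> l \<in> I \<Longrightarrow>
     wmap I rho C b xs (alpha l) \<in> real_roots I A rho C a"
  using real_roots_iff by blast

lemma simple_root_real: "a \<in> A \<Longrightarrow> i \<in> I \<Longrightarrow> alpha i \<in> real_roots I A rho C a"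
  using real_rootsI[of a "[]" a i] by simp

lemma real_roots_subset: "real_roots I A rho C a \<subseteq> R a"
proof
  fix v assume "v \<in> real_roots I A rho C a"
  then obtain b xs l where "b \<in> A" "set xs \<subseteq> I" "wtgt rho b xs = a" "l \<in> I"
    and "v = wmap I rho C b xs (alpha l)"
    using real_roots_iff by blast
  then show "v \<in> R a" using wmap_roots simple_root_in_roots by blast
qed

lemma real_roots_uminus: "v \<in> real_roots I A rho C a \<Longrightarrow> - v \<in> real_roots I A rho C a"
proof -
  assume "v \<in> real_roots I A rho C a"
  then obtain b xs l where b: "b \<in> A" and xs: "set xs \<subseteq> I" "wtgt rho b xs = a"
    and l: "l \<in> I" and v: "v = wmap I rho C b xs (alpha l)"
    using real_roots_iff by blast
  have lb: "rho l b \<in> A" and llb: "rho l (rho l b) = b"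
    using rho_closed rho_involutive b l by auto
  \<comment> \<open>Reflecting \<open>alpha l\<close> once more at the start of the path negates the root.\<close>
  have "wmap I rho C (rho l b) (l # xs) (alpha l) = - v"
    using sigma_simple_root[OF l lb] by (simp add: llb v wmap_uminus)
  moreover have "wmap I rho C (rho l b) (l # xs) (alpha l) \<in> real_roots I A rho C a"
    by (rule real_rootsI) (use lb xs l llb in auto)
  ultimately show ?thesis by simp
qed

lemma sigma_real_roots:
  assumes a: "a \<in> A" and i: "i \<in> I"
  shows "sigma I C i a ` real_roots I A rho C a = real_roots I A rho C (rho i a)"
proof (intro equalityI subsetI)
  fix w assume "w \<in> sigma I C i a ` real_roots I A rho C a"
  then obtain v where "v \<in> real_roots I A rho C a" and w: "w = sigma I C i a v" by blast
  then obtain b xs l where "b \<in> A" "set xs \<subseteq> I" "wtgt rho b xs = a" "l \<in> I"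
    and v: "v = wmap I rho C b xs (alpha l)"
    using real_roots_iff by blast
  then have "wmap I rho C b (xs @ [i]) (alpha l) \<in> real_roots I A rho C (rho i a)"
    using i by (intro real_rootsI) (auto simp: wtgt_append)
  with w v show "w \<in> real_roots I A rho C (rho i a)"
    using \<open>wtgt rho b xs = a\<close> by (simp add: wmap_append)
next
  fix w assume "w \<in> real_roots I A rho C (rho i a)"
  then obtain b xs l where b: "b \<in> A" "set xs \<subseteq> I" "wtgt rho b xs = rho i a" "l \<in> I"
    and w: "w = wmap I rho C b xs (alpha l)"
    using real_roots_iff by blast
  define u where "u = wmap I rho C b (xs @ [i]) (alpha l)"
  have "u \<in> real_roots I A rho C a"
    unfolding u_def using b i rho_involutive[OF i a] by (intro real_rootsI) (auto simp: wtgt_append)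
  moreover have "u = sigma I C i (rho i a) w"
    using b w by (simp add: u_def wmap_append)
  then have "sigma I C i a u = w"
    using sigma_involutive[OF i rho_closed[OF i a], of w] rho_involutive[OF i a] by simp
  ultimately show "w \<in> sigma I C i a ` real_roots I A rho C a" by blast
qed

lemma sigma_keeps_nonneg:
  assumes c: "c \<in> A" and l: "l \<in> I" and "l \<noteq> m" and v: "v \<in> R c"
    and supp: "supported_on {l, m} v" and "0 \<le> v" and "v \<noteq> alpha l"
  shows "0 \<le> sigma I C l c v"
proof (cases "v m = 0")
  case True
  then have "v = (\<lambda>k. v l * alpha l k)"
    using supported_on_pair[OF supp \<open>l \<noteq> m\<close>] by simp
  then have "v = - alpha l"
    using roots_on_line[OF c l] v \<open>v \<noteq> alpha l\<close> by blast
  with \<open>0 \<le> v\<close> show ?thesis by (auto simp: le_fun_def alpha_def dest: spec[of _ l])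
next
  case False
  \<comment> \<open>\<open>sigma l\<close> leaves the \<open>m\<close>-coordinate unchanged, and it is positive.\<close>
  then have "0 < sigma I C l c v m"
    using \<open>0 \<le> v\<close> \<open>l \<noteq> m\<close> by (simp add: sigma_def le_fun_def order_less_le)
  then have "\<not> sigma I C l c v \<le> 0" by (metis le_funD not_le zero_fun_apply)
  moreover have "sigma I C l c v \<in> R (rho l c)" using roots_sigma[OF c l] v by blast
  ultimately show ?thesis using roots_pos_or_neg[OF rho_closed[OF l c]] by blast
qed

end

locale rank_two_subsystem = cartan_root_system +
  fixes a :: 'a and i j :: 'i
  assumes a_in: "a \<in> A" and i_in: "i \<in> I" and j_in: "j \<in> I" and i_ne_j: "i \<noteq> j"
begin

definition letter :: "nat \<Rightarrow> 'i" where
  "letter s = (if even s then i else j)"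

definition word :: "nat \<Rightarrow> 'i list" where
  "word s = map letter [0..<s]"

definition obj :: "nat \<Rightarrow> 'a" where
  "obj s = wtgt rho a (word s)"

definition W :: "nat \<Rightarrow> ('i \<Rightarrow> int) \<Rightarrow> ('i \<Rightarrow> int)" where
  "W s = wmap I rho C a (word s)"

definition W_inv :: "nat \<Rightarrow> ('i \<Rightarrow> int) \<Rightarrow> ('i \<Rightarrow> int)" where
  "W_inv s = wmap I rho C (obj s) (rev (word s))"

(* W s = sigma_{letter (s-1)} ... sigma_{letter 0}, starting at a; the beta s are the positive roots
   of the rank-two subsystem in their standard enumeration, as long as they stay positive. *)
definition beta :: "nat \<Rightarrow> 'i \<Rightarrow> int" where
  "beta s = W_inv s (alpha (letter s))"

lemma letter_in: "letter s \<in> I"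
  using i_in j_in by (simp add: letter_def)

lemma letters_Suc: "{letter s, letter (Suc s)} = {i, j}" and letter_Suc_ne: "letter s \<noteq> letter (Suc s)"
  using i_ne_j by (auto simp: letter_def)

lemma set_word: "set (word s) \<subseteq> {i, j}"
  by (auto simp: word_def letter_def)

lemma word_in: "set (word s) \<subseteq> I"
  using set_word i_in j_in by blast

lemma obj_in: "obj s \<in> A"
  by (simp add: obj_def wtgt_closed[OF a_in word_in])

lemma W_0: "W 0 = id"
  by (simp add: W_def word_def)

lemma W_Suc: "W (Suc s) v = sigma I C (letter s) (obj s) (W s v)"
  by (simp add: W_def obj_def word_def wmap_append)

lemma W_inv_W: "W_inv s (W s v) = v"
  using wmap_rev[OF a_in word_in] by (simp add: W_inv_def W_def obj_def)

lemma W_W_inv: "W s (W_inv s v) = v"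
proof -
  have "wtgt rho (obj s) (rev (word s)) = a" "set (rev (word s)) \<subseteq> I"
    using wtgt_rev[OF a_in word_in] word_in by (auto simp: obj_def)
  with wmap_rev[OF obj_in[of s], where xs = "rev (word s)" and v = v] show ?thesis
    by (simp add: W_inv_def W_def)
qed

lemma W_inj: "W s x = W s y \<Longrightarrow> x = y"
  by (metis W_inv_W)

lemma W_uminus: "W s (- v) = - W s v"
  by (simp add: W_def wmap_uminus)

lemma W_roots: "v \<in> R a \<Longrightarrow> W s v \<in> R (obj s)"
  unfolding W_def obj_def using wmap_roots[OF a_in word_in] .

lemma W_supported: "supported_on {i, j} v \<Longrightarrow> supported_on {i, j} (W s v)"
  unfolding W_def using wmap_supported_on[OF set_word] .

lemma W_beta: "W s (beta s) = alpha (letter s)"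
  by (simp add: beta_def W_W_inv)

lemma W_Suc_beta: "W (Suc s) (beta s) = - alpha (letter s)"
  by (simp add: W_Suc W_beta sigma_simple_root[OF letter_in obj_in])

lemma beta_real_root: "beta s \<in> real_roots I A rho C a"
  unfolding beta_def W_inv_def
  using word_in wtgt_rev[OF a_in word_in]
  by (intro real_rootsI[OF obj_in _ _ letter_in]) (auto simp: obj_def)

lemma beta_root: "beta s \<in> R a"
  using beta_real_root real_roots_subset by blast

lemma beta_supported: "supported_on {i, j} (beta s)"
proof -
  have "supported_on {i, j} (alpha (letter s))"
    using letters_Suc[of s] by (auto simp: supported_on_def alpha_def)
  then show ?thesis
    unfolding beta_def W_inv_def by (rule wmap_supported_on[rotated]) (use set_word in auto)
qed

lemma beta_0: "beta 0 = alpha i"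
  by (simp add: beta_def W_inv_def word_def letter_def)

lemma W_stays_nonneg:
  assumes "\<gamma> \<in> R a" "supported_on {i, j} \<gamma>" "k \<le> s" "0 \<le> W k \<gamma>"
    and "\<forall>t. k \<le> t \<and> t < s \<longrightarrow> W t \<gamma> \<noteq> alpha (letter t)"
  shows "0 \<le> W s \<gamma>"
  using assms(3)
proof (induction rule: dec_induct)
  case base
  show ?case by (rule assms(4))
next
  case (step n)
  have "supported_on {letter n, letter (Suc n)} (W n \<gamma>)"
    using W_supported[OF assms(2)] by (simp add: letters_Suc)
  moreover have "W n \<gamma> \<noteq> alpha (letter n)" using assms(5) step.hyps by simp
  ultimately have "0 \<le> sigma I C (letter n) (obj n) (W n \<gamma>)"
    using step.IH
    by (intro sigma_keeps_nonneg[OF obj_in letter_in letter_Suc_ne W_roots[OF assms(1)]])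
  then show ?case by (simp only: W_Suc)
qed

lemma W_stays_nonpos:
  assumes "\<gamma> \<in> R a" "supported_on {i, j} \<gamma>" "k \<le> s" "W k \<gamma> \<le> 0"
    and "\<forall>t. k \<le> t \<and> t < s \<longrightarrow> W t \<gamma> \<noteq> - alpha (letter t)"
  shows "W s \<gamma> \<le> 0"
proof -
  have "\<forall>t. k \<le> t \<and> t < s \<longrightarrow> W t (- \<gamma>) \<noteq> alpha (letter t)"
    using assms(5) by (simp add: W_uminus minus_equation_iff eq_commute[of "- alpha _"])
  moreover have "0 \<le> W k (- \<gamma>)"
    using assms(4) unfolding W_uminus by (simp only: neg_0_le_iff_le)
  moreover have "supported_on {i, j} (- \<gamma>)"
    using assms(2) by (simp only: supported_on_uminus)
  ultimately have "0 \<le> W s (- \<gamma>)"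
    using W_stays_nonneg[OF roots_uminus[OF a_in assms(1)] _ assms(3)] by blast
  then show ?thesis unfolding W_uminus by (simp only: neg_0_le_iff_le)
qed

lemma W_inv_linear:
  "W_inv s (\<lambda>k. p * x k + q * y k) = (\<lambda>k. p * W_inv s x k + q * W_inv s y k)"
  by (simp add: W_inv_def wmap_linear)

lemma inj_beta_if_nonneg:
  assumes nonneg: "\<forall>t. 0 \<le> beta t"
  shows "inj beta"
proof -
  have "beta k \<noteq> beta l" if "k < l" for k l
  proof
    assume eq: "beta k = beta l"
    \<comment> \<open>Along the word, \<open>beta l\<close> is negative right after step \<open>k\<close> but positive at step \<open>l\<close>;
      it can only turn positive by passing through some \<open>- alpha (letter t)\<close>.\<close>
    have "W (Suc k) (beta l) \<le> 0"
      using W_Suc_beta[of k] alpha_nonneg eq by simp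
    moreover have "\<not> W l (beta l) \<le> 0"
      by (simp add: W_beta alpha_not_nonpos)
    ultimately have "\<not> (\<forall>t. Suc k \<le> t \<and> t < l \<longrightarrow> W t (beta l) \<noteq> - alpha (letter t))"
      using W_stays_nonpos[OF beta_root beta_supported Suc_leI[OF that]] by blast
    then obtain t where "W t (beta l) = - alpha (letter t)" by blast
    then have "W t (beta l) = W t (- beta t)" by (simp add: W_uminus W_beta)
    then have "beta l = - beta t" by (rule W_inj)
    then have "beta l \<le> 0" using nonneg by simp
    from nonneg_nonpos_not_root[OF a_in beta_root nonneg[rule_format] this] show False .
  qed
  then show ?thesis by (metis injI linorder_neqE_nat)
qed

lemma ex_beta_not_nonneg:
  assumes "finite (m_ij (real_roots I A rho C a) i j)"
  shows "\<exists>t. \<not> 0 \<le> beta t"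
proof (rule ccontr)
  assume "\<not> ?thesis"
  then have nonneg: "\<forall>t. 0 \<le> beta t" by blast
  then have "range beta \<subseteq> m_ij (real_roots I A rho C a) i j"
    using beta_real_root beta_supported by (auto simp: m_ij_eq[OF i_ne_j])
  then have "finite (range beta)" using assms finite_subset by blast
  then show False using inj_beta_if_nonneg[OF nonneg] finite_imageD by blast
qed

lemma W_inv_alpha_prev: "W_inv (Suc n) (alpha (letter n)) = - beta n"
  using W_Suc_beta[of n] W_inv_W[of "Suc n" "- beta n"] by (simp add: W_uminus)

lemma positive_roots_among_betas:
  assumes "0 \<le> beta n" and "\<not> 0 \<le> beta (Suc n)"
  shows "m_ij (R a) i j \<subseteq> beta ` {..n}"
proof
  fix \<gamma> assume "\<gamma> \<in> m_ij (R a) i j"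
  then have \<gamma>: "\<gamma> \<in> R a" "supported_on {i, j} \<gamma>" "0 \<le> \<gamma>" by (auto simp: m_ij_eq[OF i_ne_j])
  show "\<gamma> \<in> beta ` {..n}"
  proof (rule ccontr)
    assume not_beta: "\<gamma> \<notin> beta ` {..n}"
    have "W t \<gamma> \<noteq> alpha (letter t)" if "t < Suc n" for t
    proof
      assume "W t \<gamma> = alpha (letter t)"
      then have "\<gamma> = beta t" using W_beta by (metis W_inj)
      with not_beta that show False by auto
    qed
    then have "0 \<le> W (Suc n) \<gamma>"
      using W_stays_nonneg[OF \<gamma>(1,2), of 0 "Suc n"] \<gamma>(3) by (simp add: W_0)
    define u where "u = W (Suc n) \<gamma>"
    have u_nonneg: "0 \<le> u k" for k
      using \<open>0 \<le> W (Suc n) \<gamma>\<close> by (simp add: u_def le_fun_def)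
    have decomp: "u = (\<lambda>k. u (letter n) * alpha (letter n) k + u (letter (Suc n)) * alpha (letter (Suc n)) k)"
      using supported_on_pair[OF _ letter_Suc_ne] W_supported[OF \<gamma>(2)] by (simp add: u_def letters_Suc)
    \<comment> \<open>Pulling back, \<open>\<gamma>\<close> is a combination of \<open>- beta n\<close> and \<open>beta (Suc n)\<close> with
      nonnegative coefficients, hence nonpositive.\<close>
    have "\<gamma> = W_inv (Suc n) u" by (simp add: u_def W_inv_W)
    also have "\<dots> = W_inv (Suc n)
        (\<lambda>k. u (letter n) * alpha (letter n) k + u (letter (Suc n)) * alpha (letter (Suc n)) k)"
      by (rule arg_cong[OF decomp])
    also have "\<dots> = (\<lambda>k. u (letter n) * (- beta n) k + u (letter (Suc n)) * beta (Suc n) k)"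
      by (simp only: W_inv_linear W_inv_alpha_prev beta_def)
    finally have \<gamma>_eq: "\<gamma> = (\<lambda>k. u (letter n) * (- beta n) k + u (letter (Suc n)) * beta (Suc n) k)" .
    have "beta (Suc n) \<le> 0" using assms(2) roots_pos_or_neg[OF a_in beta_root] by blast
    have "\<gamma> k \<le> 0" for k
    proof -
      have "u (letter n) * (- beta n) k \<le> 0"
        using u_nonneg assms(1) by (simp add: le_fun_def mult_nonneg_nonpos)
      moreover have "u (letter (Suc n)) * beta (Suc n) k \<le> 0"
        using u_nonneg \<open>beta (Suc n) \<le> 0\<close> by (simp add: le_fun_def mult_nonneg_nonpos)
      ultimately show ?thesis by (subst \<gamma>_eq) simp
    qed
    then have "\<gamma> \<le> 0" by (simp add: le_fun_def)
    from nonneg_nonpos_not_root[OF a_in \<gamma>(1,3) this] show False .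
  qed
qed

lemma m_ij_real_roots:
  assumes "finite (m_ij (real_roots I A rho C a) i j)"
  shows "m_ij (real_roots I A rho C a) i j = m_ij (R a) i j"
proof -
  define n where "n = (LEAST t. \<not> 0 \<le> beta t)"
  have not_nonneg: "\<not> 0 \<le> beta n"
    using ex_beta_not_nonneg[OF assms] LeastI_ex unfolding n_def by metis
  have nonneg: "0 \<le> beta t" if "t < n" for t
    using not_less_Least that unfolding n_def by blast
  have "n \<noteq> 0" using not_nonneg beta_0 alpha_nonneg by metis
  then obtain m where n: "n = Suc m" using not0_implies_Suc by blast
  have "m_ij (R a) i j \<subseteq> beta ` {..m}"
    using positive_roots_among_betas[of m] nonneg not_nonneg n by simp
  also have "\<dots> \<subseteq> m_ij (real_roots I A rho C a) i j"
    using beta_real_root beta_supported nonneg n by (auto simp: m_ij_eq[OF i_ne_j])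
  finally show ?thesis
    using real_roots_subset by (auto simp: m_ij_def)
qed

end

context cartan_root_system
begin

lemma real_roots_pos_neg:
  assumes "a \<in> A"
  shows "real_roots I A rho C a
    = pos_roots (real_roots I A rho C a) \<union> uminus ` pos_roots (real_roots I A rho C a)"
proof (intro equalityI subsetI)
  fix v assume v: "v \<in> real_roots I A rho C a"
  then have "0 \<le> v \<or> 0 \<le> - v"
    using roots_pos_or_neg[OF assms] real_roots_subset by fastforce
  moreover have "v = - (- v)" by simp
  ultimately show "v \<in> pos_roots (real_roots I A rho C a) \<union> uminus ` pos_roots (real_roots I A rho C a)"
    using v real_roots_uminus unfolding pos_roots_eq by blast
qed (auto simp: pos_roots_eq real_roots_uminus)

lemma real_roots_on_line:
  assumes "a \<in> A" "i \<in> I"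
  shows "real_roots I A rho C a \<inter> {(\<lambda>k. c * alpha i k) | c::int. True} = {alpha i, - alpha i}"
proof -
  have "alpha i = (\<lambda>k. 1 * alpha i k)" "- alpha i = (\<lambda>k. (- 1) * alpha i k)"
    by (simp_all add: fun_eq_iff)
  then show ?thesis
    using roots_on_line[OF assms] real_roots_subset simple_root_real[OF assms]
      real_roots_uminus[OF simple_root_real[OF assms]] by blast
qed

lemma real_roots_rho_period:
  assumes "a \<in> A" "i \<in> I" "j \<in> I" "i \<noteq> j" "finite (m_ij (real_roots I A rho C a) i j)"
  shows "((rho i \<circ> rho j) ^^ card (m_ij (real_roots I A rho C a) i j)) a = a"
proof -
  interpret rank_two_subsystem I A rho C R a i j
    using assms(1-4) by unfold_locales
  show ?thesis
    using roots_rho_period[OF assms(1-4)] assms(5) by (simp add: m_ij_real_roots[OF assms(5)])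
qed

theorem real_roots_root_system: "root_system I A rho C (real_roots I A rho C)"
proof -
  have "\<forall>a\<in>A. real_roots I A rho C a \<subseteq> zvec I"
    using real_roots_subset roots_zvec by blast
  moreover have "\<forall>a\<in>A. real_roots I A rho C a
      = pos_roots (real_roots I A rho C a) \<union> uminus ` pos_roots (real_roots I A rho C a)"
    by (intro ballI real_roots_pos_neg)
  moreover have "\<forall>a\<in>A. \<forall>i\<in>I.
      real_roots I A rho C a \<inter> {(\<lambda>k. c * alpha i k) | c::int. True} = {alpha i, - alpha i}"
    by (intro ballI real_roots_on_line)
  moreover have "\<forall>a\<in>A. \<forall>i\<in>I. sigma I C i a ` real_roots I A rho C a = real_roots I A rho C (rho i a)"
    by (intro ballI sigma_real_roots)
  moreover have "\<forall>a\<in>A. \<forall>i\<in>I. \<forall>j\<in>I. i \<noteq> j \<longrightarrow> finite (m_ij (real_roots I A rho C a) i j) \<longrightarrow>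
      ((rho i \<circ> rho j) ^^ card (m_ij (real_roots I A rho C a) i j)) a = a"
    by (intro ballI impI real_roots_rho_period)
  ultimately show ?thesis
    unfolding root_system_def using cartan_scheme by blast
qed

end

theorem proposition2p9:
  fixes I :: "'i set" and A :: "'a set" and rho :: "'i \<Rightarrow> 'a \<Rightarrow> 'a"
    and C :: "'a \<Rightarrow> 'i \<Rightarrow> 'i \<Rightarrow> int" and R :: "'a \<Rightarrow> ('i \<Rightarrow> int) set"
  assumes "cartan_scheme I A rho C"
    and "root_system I A rho C R"
  shows "root_system I A rho C (real_roots I A rho C)
       \<and> weyl_groupoid_rs I A rho C (real_roots I A rho C) = weyl_groupoid_rs I A rho C R"
proof -
  interpret cartan_root_system I A rho C R
    using assms(2) by unfold_locales
  show ?thesis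
    using real_roots_root_system by (simp add: weyl_groupoid_rs_def)
qed

end
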